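(* Let $\mathcal{X}$ be an input space, $\mathcal{Y}$ an output space, and $d_{\mathcal{X}}:\mathcal{X}\times\mathcal{X}\to\mathbb{R}_{\ge 0}$ a distance function. Define $d$ on $\mathcal{X}\times\mathcal{Y}$ by $d((x_1,y_1),(x_2,y_2)) = d_{\mathcal{X}}(x_1,x_2)$ if $y_1=y_2$ and $d((x_1,y_1),(x_2,y_2))=\infty$ otherwise. Let $\mathcal{D}$ and $\tilde{\mathcal{D}}$ be probability distributions on $\mathcal{X}\times\mathcal{Y}$ such that $W_1^{d}(\mathcal{D},\tilde{\mathcal{D}})\le \epsilon$ for a real number $\epsilon\ge 0$, in the sense that there exists a coupling $\gamma^*$ of $\mathcal{D}$ and $\tilde{\mathcal{D}}$ (a joint distribution on $(\mathcal{X}\times\mathcal{Y})^2$ with marginals $\mathcal{D}$ and $\tilde{\mathcal{D}}$) with $\mathbb{E}_{(\tau_1,\tau_2)\sim\gamma^*}[d(\tau_1,\tau_2)]\le\epsilon$. Let $\mathcal{S}:\mathcal{X}\to\Delta(\mathcal{X})$ assign to each $x\in\mathcal{X}$ a probability distribution $\mathcal{S}(x)$ on $\mathcal{X}$, and let $\psi:\mathbb{R}_{\ge0}\to\mathbb{R}$ be a concave non-decreasing function such that $\mathrm{TV}(\mathcal{S}(x_1),\mathcal{S}(x_2))\le \psi(d_{\mathcal{X}}(x_1,x_2))$ for all $x_1,x_2\in\mathcal{X}$. Given a function $h:\mathcal{X}\times\mathcal{Y}\to[0,1]$, define its smoothed version $\bar h(x,y)=\mathbb{E}_{x'\sim\mathcal{S}(x)}[h(x',y)]$.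 Then \[\left|\mathbb{E}_{(x_1,y_1)\sim\mathcal{D}}[\bar h(x_1,y_1)] - \mathbb{E}_{(x_2,y_2)\sim\tilde{\mathcal{D}}}[\bar h(x_2,y_2)]\right|\le \psi(\epsilon).\]
   Context: $\mathrm{TV}$ denotes total variation distance between probability distributions, $\mathrm{TV}(\mu_1,\mu_2)=\tfrac12\int|\mu_1-\mu_2|$. $\Delta(\mathcal{X})$ denotes the set of probability distributions over $\mathcal{X}$. $W_1^d$ is the 1-Wasserstein distance with respect to the cost $d$. *)

theory Defs
  imports "HOL-Probability.Probability"
begin

text \<open>Total variation distance between two (probability) measures on the same
  measurable space: the largest discrepancy on a measurable event
  (for probability measures this equals one half of the total variation norm
  of the difference).\<close>
definition tv_dist :: "'a measure \<Rightarrow> 'a measure \<Rightarrow> real" where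
  "tv_dist \<mu>1 \<mu>2 = (SUP A \<in> sets \<mu>1. \<bar>measure \<mu>1 A - measure \<mu>2 A\<bar>)"

definition lift_cost :: "('x \<Rightarrow> 'x \<Rightarrow> real) \<Rightarrow> ('x \<times> 'y) \<Rightarrow> ('x \<times> 'y) \<Rightarrow> ennreal" where
  "lift_cost dX t1 t2 = (if snd t1 = snd t2 then ennreal (dX (fst t1) (fst t2)) else \<infinity>)"

definition smoothed :: "('x \<Rightarrow> 'x measure) \<Rightarrow> ('x \<times> 'y \<Rightarrow> real) \<Rightarrow> 'x \<times> 'y \<Rightarrow> real" where
  "smoothed S h p = (\<integral>x'. h (x', snd p) \<partial>S (fst p))"

end

(* Couple D and D' by gamma. On a coupled pair of finite cost the labels agree, so the two
   smoothed values are integrals of the same [0,1]-valued function against S x1 and S x2 and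
   differ by at most TV(S x1, S x2) <= psi(d_X(x1, x2)). Integrating over gamma and applying
   Jensen's inequality to the concave, nondecreasing psi bounds the difference of the two
   expectations by psi(E d) <= psi(epsilon). *)

theory Submission
  imports Defs
begin

lemma concave_mono_on_supergradient:
  fixes \<psi> :: "real \<Rightarrow> real"
  assumes concave: "concave_on {0..} \<psi>" and mono: "mono_on {0..} \<psi>" and "\<epsilon> > 0"
  shows "\<exists>c\<ge>0. \<forall>t\<ge>0. \<psi> t \<le> \<psi> \<epsilon> + c * (t - \<epsilon>)"
proof -
  have convex: "convex_on {0..} (\<lambda>x. - \<psi> x)"
    using concave by (simp add: concave_on_def)
  have slopes: "(\<psi> t - \<psi> \<epsilon>) / (t - \<epsilon>) \<le> (\<psi> \<epsilon> - \<psi> s) / (\<epsilon> - s)"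
    if "0 \<le> s" "s < \<epsilon>" "\<epsilon> < t" for s t
    using convex_on_slope_le[OF convex, of s t \<epsilon>] that
    by (simp add: field_simps)
  define c where "c = (INF s\<in>{0..<\<epsilon>}. (\<psi> \<epsilon> - \<psi> s) / (\<epsilon> - s))"
  have c_ge_right: "(\<psi> t - \<psi> \<epsilon>) / (t - \<epsilon>) \<le> c" if "\<epsilon> < t" for t
    unfolding c_def using \<open>\<epsilon> > 0\<close> slopes that by (intro cINF_greatest) auto
  have c_le_left: "c \<le> (\<psi> \<epsilon> - \<psi> s) / (\<epsilon> - s)" if "0 \<le> s" "s < \<epsilon>" for s
    unfolding c_def using that c_ge_right[of "\<epsilon> + 1"] slopes[of _ "\<epsilon> + 1"]
    by (intro cINF_lower bdd_belowI2[where m = "\<psi> (\<epsilon> + 1) - \<psi> \<epsilon>"]) auto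
  have "\<psi> \<epsilon> \<le> \<psi> (\<epsilon> + 1)"
    using mono \<open>\<epsilon> > 0\<close> by (auto intro: mono_onD)
  then have "c \<ge> 0"
    using c_ge_right[of "\<epsilon> + 1"] by simp
  moreover have "\<psi> t \<le> \<psi> \<epsilon> + c * (t - \<epsilon>)" if "t \<ge> 0" for t
  proof (cases t \<epsilon> rule: linorder_cases)
    case less
    then show ?thesis
      using c_le_left[OF that less] by (simp add: le_divide_eq algebra_simps)
  next
    case greater
    then show ?thesis
      using c_ge_right[OF greater] by (simp add: divide_le_eq algebra_simps)
  qed simp
  ultimately show ?thesis by blast
qed

(* Jensen's inequality through a supergradient at epsilon; the library's jensens_inequality
   needs an open interval. At epsilon = 0 there may be no finite supergradient (psi = sqrt),
   but then r vanishes almost everywhere. *)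
lemma (in prob_space) expectation_le_concave_mono:
  fixes u r :: "'a \<Rightarrow> real" and \<psi> :: "real \<Rightarrow> real"
  assumes u: "integrable M u" and r: "integrable M r" "AE x in M. 0 \<le> r x"
    and r_le: "expectation r \<le> \<epsilon>"
    and u_le: "AE x in M. u x \<le> \<psi> (r x)"
    and concave: "concave_on {0..} \<psi>" and mono: "mono_on {0..} \<psi>"
  shows "expectation u \<le> \<psi> \<epsilon>"
proof -
  obtain c where "c \<ge> 0" and tangent: "AE x in M. u x \<le> \<psi> \<epsilon> + c * (r x - \<epsilon>)"
  proof (cases "\<epsilon> > 0")
    case True
    then obtain c where "c \<ge> 0" and c: "\<forall>t\<ge>0. \<psi> t \<le> \<psi> \<epsilon> + c * (t - \<epsilon>)"
      using concave_mono_on_supergradient[OF concave mono] by blast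
    from u_le r(2) have "AE x in M. u x \<le> \<psi> \<epsilon> + c * (r x - \<epsilon>)"
      by eventually_elim (use c in \<open>blast intro: order_trans\<close>)
    with \<open>c \<ge> 0\<close> show ?thesis by (rule that)
  next
    case False
    have "0 \<le> expectation r"
      using r(2) by (rule integral_nonneg_AE)
    with False r_le have "\<epsilon> = 0" "expectation r = 0"
      by auto
    then have "AE x in M. r x = 0"
      using integral_nonneg_eq_0_iff_AE[OF r] by simp
    with u_le have "AE x in M. u x \<le> \<psi> \<epsilon> + 0 * (r x - \<epsilon>)"
      by eventually_elim (simp add: \<open>\<epsilon> = 0\<close>)
    then show ?thesis by (rule that[OF order_refl])
  qed
  then have "expectation u \<le> expectation (\<lambda>x. \<psi> \<epsilon> + c * (r x - \<epsilon>))"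
    using u r by (intro integral_mono_AE) auto
  also have "\<dots> = \<psi> \<epsilon> + c * (expectation r - \<epsilon>)"
    using r by (simp add: prob_space algebra_simps)
  also have "\<dots> \<le> \<psi> \<epsilon>"
    using \<open>c \<ge> 0\<close> r_le by (simp add: mult_nonneg_nonpos)
  finally show ?thesis .
qed

lemma card_levels_le_eq_floor:
  fixes y :: real
  assumes "0 \<le> y" "y \<le> 1"
  shows "card {k\<in>{1..n}. real k / real n \<le> y} = nat \<lfloor>real n * y\<rfloor>"
proof (cases "n = 0")
  case False
  define m where "m = nat \<lfloor>real n * y\<rfloor>"
  have "0 \<le> \<lfloor>real n * y\<rfloor>"
    using assms by simp
  then have levels: "real k / real n \<le> y \<longleftrightarrow> k \<le> m" for k
    using False by (simp add: m_def divide_le_eq le_floor_iff le_nat_iff mult.commute)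
  have "m \<le> n"
    using assms mult_left_le[of y "real n"] unfolding m_def by linarith
  have "{k\<in>{1..n}. real k / real n \<le> y} = {k\<in>{1..n}. k \<le> m}"
    by (simp only: levels)
  also have "\<dots> = {1..m}"
    using \<open>m \<le> n\<close> by auto
  finally show ?thesis by (simp add: m_def)
qed simp

lemma measure_diff_le_tv_dist:
  assumes "prob_space \<mu>" "prob_space \<nu>" "A \<in> sets \<mu>"
  shows "\<bar>measure \<mu> A - measure \<nu> A\<bar> \<le> tv_dist \<mu> \<nu>"
  unfolding tv_dist_def
proof (rule cSUP_upper[OF \<open>A \<in> sets \<mu>\<close>])
  have "\<bar>measure \<mu> B - measure \<nu> B\<bar> \<le> 1" for B
    unfolding abs_le_iff
    using prob_space.prob_le_1[OF assms(1), of B] prob_space.prob_le_1[OF assms(2), of B]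
      measure_nonneg[of \<mu> B] measure_nonneg[of \<nu> B]
    by linarith
  then show "bdd_above ((\<lambda>A. \<bar>measure \<mu> A - measure \<nu> A\<bar>) ` sets \<mu>)"
    by (rule bdd_aboveI2)
qed

lemma integral_diff_le_tv_dist_plus_inverse:
  fixes f :: "'a \<Rightarrow> real"
  assumes \<mu>: "prob_space \<mu>" and \<nu>: "prob_space \<nu>" and sets_eq: "sets \<nu> = sets \<mu>"
    and f: "f \<in> borel_measurable \<mu>" "\<And>x. x \<in> space \<mu> \<Longrightarrow> f x \<in> {0..1}"
    and "n > 0"
  shows "\<bar>(\<integral>x. f x \<partial>\<mu>) - (\<integral>x. f x \<partial>\<nu>)\<bar> \<le> tv_dist \<mu> \<nu> + 1 / real n"
proof -
  interpret \<mu>: prob_space \<mu> by fact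
  interpret \<nu>: prob_space \<nu> by fact
  have space_eq: "space \<nu> = space \<mu>"
    using sets_eq by (rule sets_eq_imp_space_eq)
  define A where "A k = {x\<in>space \<mu>. real k / real n \<le> f x}" for k :: nat
  have A: "A k \<in> sets \<mu>" "A k \<in> sets \<nu>" for k
    unfolding A_def sets_eq using f(1) by measurable
  \<comment> \<open>g = floor (n f) / n is a combination of indicators of level sets of f\<close>
  define g where "g x = (\<Sum>k\<in>{1..n}. indicator (A k) x) / real n" for x :: 'a
  have g_floor: "real n * g x = of_int \<lfloor>real n * f x\<rfloor>" if "x \<in> space \<mu>" for x
    using that card_levels_le_eq_floor[of "f x" n] f(2)[OF that] \<open>n > 0\<close>
    by (simp add: g_def A_def indicator_def sum.If_cases Int_def)
  have g_approx: "f x - 1 / real n \<le> g x \<and> g x \<le> f x" if "x \<in> space \<mu>" for x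
  proof -
    have "real n * f x - 1 \<le> real n * g x" "real n * g x \<le> real n * f x"
      using g_floor[OF that] of_int_floor_le[of "real n * f x"]
        real_of_int_floor_gt_diff_one[of "real n * f x"] by linarith+
    then show ?thesis
      using \<open>n > 0\<close> by (simp add: field_simps)
  qed
  have g_nonneg: "0 \<le> g x" for x
    by (simp add: g_def sum_nonneg)
  have sandwich: "(\<integral>x. g x \<partial>M) \<le> (\<integral>x. f x \<partial>M) \<and>
      (\<integral>x. f x \<partial>M) \<le> (\<integral>x. g x \<partial>M) + 1 / real n"
    and integral_g: "(\<integral>x. g x \<partial>M) = (\<Sum>k\<in>{1..n}. measure M (A k)) / real n"
    if "prob_space M" "sets M = sets \<mu>" for M
  proof -
    interpret prob_space M by fact
    have space_M: "space M = space \<mu>"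
      using \<open>sets M = sets \<mu>\<close> by (rule sets_eq_imp_space_eq)
    have A_M: "A k \<in> sets M" for k
      using A(1) \<open>sets M = sets \<mu>\<close> by simp
    have "f \<in> borel_measurable M" "g \<in> borel_measurable M"
      unfolding g_def using f(1) A_M measurable_cong_sets[OF \<open>sets M = sets \<mu>\<close> refl] by auto
    moreover have "\<bar>f x\<bar> \<le> 1" "\<bar>g x\<bar> \<le> 1" if "x \<in> space M" for x
      using f(2) g_approx g_nonneg that space_M by (force simp: abs_le_iff)+
    ultimately have "integrable M f" "integrable M g"
      by (auto intro: integrable_const_bound[where B = 1])
    then have "(\<integral>x. g x \<partial>M) \<le> (\<integral>x. f x \<partial>M)"
      and "(\<integral>x. f x \<partial>M) \<le> (\<integral>x. g x + 1 / real n \<partial>M)"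
      using g_approx space_M by (intro integral_mono; force)+
    then show "(\<integral>x. g x \<partial>M) \<le> (\<integral>x. f x \<partial>M) \<and>
        (\<integral>x. f x \<partial>M) \<le> (\<integral>x. g x \<partial>M) + 1 / real n"
      using \<open>integrable M g\<close> by (simp add: prob_space)
    show "(\<integral>x. g x \<partial>M) = (\<Sum>k\<in>{1..n}. measure M (A k)) / real n"
      using A_M by (simp add: g_def integral_sum less_top[symmetric])
  qed
  have "\<bar>(\<integral>x. g x \<partial>\<mu>) - (\<integral>x. g x \<partial>\<nu>)\<bar>
      = \<bar>\<Sum>k\<in>{1..n}. measure \<mu> (A k) - measure \<nu> (A k)\<bar> / real n"
    using integral_g[OF \<mu> refl] integral_g[OF \<nu> sets_eq]
    by (simp add: sum_subtractf diff_divide_distrib[symmetric])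
  also have "\<dots> \<le> (\<Sum>k\<in>{1..n}. \<bar>measure \<mu> (A k) - measure \<nu> (A k)\<bar>) / real n"
    by (intro divide_right_mono sum_abs) simp
  also have "\<dots> \<le> (\<Sum>k\<in>{1..n}. tv_dist \<mu> \<nu>) / real n"
    using measure_diff_le_tv_dist[OF \<mu> \<nu> A(1)] by (intro divide_right_mono sum_mono) auto
  also have "\<dots> = tv_dist \<mu> \<nu>"
    using \<open>n > 0\<close> by simp
  finally show ?thesis
    using sandwich[OF \<mu> refl] sandwich[OF \<nu> sets_eq] by linarith
qed

lemma integral_diff_le_tv_dist:
  fixes f :: "'a \<Rightarrow> real"
  assumes "prob_space \<mu>" "prob_space \<nu>" "sets \<nu> = sets \<mu>"
    and "f \<in> borel_measurable \<mu>" "\<And>x. x \<in> space \<mu> \<Longrightarrow> f x \<in> {0..1}"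
  shows "\<bar>(\<integral>x. f x \<partial>\<mu>) - (\<integral>x. f x \<partial>\<nu>)\<bar> \<le> tv_dist \<mu> \<nu>"
proof (rule field_le_epsilon)
  fix e :: real assume "e > 0"
  then obtain n :: nat where "n > 0" "1 / real n < e"
    by (metis ex_inverse_of_nat_less inverse_eq_divide)
  then show "\<bar>(\<integral>x. f x \<partial>\<mu>) - (\<integral>x. f x \<partial>\<nu>)\<bar> \<le> tv_dist \<mu> \<nu> + e"
    using integral_diff_le_tv_dist_plus_inverse[OF assms, of n] by linarith
qed

lemma prob_kernelD:
  assumes "S \<in> M \<rightarrow>\<^sub>M prob_algebra N" "x \<in> space M"
  shows "prob_space (S x)" "sets (S x) = sets N" "space (S x) = space N"
proof -
  have "S x \<in> space (prob_algebra N)"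
    using measurable_space[OF assms] .
  then show "prob_space (S x)" and sets: "sets (S x) = sets N"
    by (simp_all add: space_prob_algebra)
  from sets show "space (S x) = space N"
    by (rule sets_eq_imp_space_eq)
qed

locale smoothing =
  fixes MX :: "'x measure" and MY :: "'y measure"
    and S :: "'x \<Rightarrow> 'x measure" and h :: "'x \<times> 'y \<Rightarrow> real"
  assumes S: "S \<in> MX \<rightarrow>\<^sub>M prob_algebra MX"
    and h: "h \<in> borel_measurable (MX \<Otimes>\<^sub>M MY)"
    and h_range: "\<And>p. p \<in> space (MX \<Otimes>\<^sub>M MY) \<Longrightarrow> h p \<in> {0..1}"
begin

lemma section_measurable_kernel:
  assumes "x \<in> space MX" "y \<in> space MY"
  shows "(\<lambda>x'. h (x', y)) \<in> borel_measurable (S x)"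
proof -
  have "(\<lambda>x'. h (x', y)) \<in> borel_measurable MX"
    using measurable_compose[OF measurable_Pair2'[OF assms(2)] h] by simp
  then show ?thesis
    using measurable_cong_sets[OF prob_kernelD(2)[OF S assms(1)] refl] by blast
qed

lemma section_in_unit:
  assumes "x \<in> space MX" "y \<in> space MY" "x' \<in> space (S x)"
  shows "h (x', y) \<in> {0..1}"
  using assms h_range prob_kernelD(3)[OF S assms(1)] by (simp add: space_pair_measure)

lemma smoothed_in_unit:
  assumes "p \<in> space (MX \<Otimes>\<^sub>M MY)"
  shows "smoothed S h p \<in> {0..1}"
proof -
  obtain x y where p: "p = (x, y)" and x: "x \<in> space MX" and y: "y \<in> space MY"
    using assms by (cases p) (auto simp: space_pair_measure)
  interpret prob_space "S x"
    using prob_kernelD(1)[OF S x] .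
  have "integrable (S x) (\<lambda>x'. h (x', y))"
    using section_measurable_kernel[OF x y] section_in_unit[OF x y]
    by (intro integrable_const_bound[where B = 1]) auto
  moreover have "0 \<le> (\<integral>x'. h (x', y) \<partial>S x)"
    using section_in_unit[OF x y] by (intro integral_nonneg_AE) auto
  ultimately show ?thesis
    using section_in_unit[OF x y] by (auto simp: smoothed_def p intro!: integral_le_const)
qed

lemma borel_measurable_smoothed: "smoothed S h \<in> borel_measurable (MX \<Otimes>\<^sub>M MY)"
proof -
  \<comment> \<open>the library proves kernel measurability only for nonnegative integrals\<close>
  have kernel: "(\<lambda>p. S (fst p)) \<in> MX \<Otimes>\<^sub>M MY \<rightarrow>\<^sub>M subprob_algebra MX"
    using measurable_compose[OF measurable_fst measurable_prob_algebraD[OF S]] .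
  have "(\<lambda>p. \<integral>\<^sup>+x'. ennreal (h (x', snd p)) \<partial>S (fst p)) \<in> borel_measurable (MX \<Otimes>\<^sub>M MY)"
    by (rule nn_integral_measurable_subprob_algebra2[OF _ kernel]) (use h in measurable)
  then have "(\<lambda>p. enn2real (\<integral>\<^sup>+x'. ennreal (h (x', snd p)) \<partial>S (fst p)))
      \<in> borel_measurable (MX \<Otimes>\<^sub>M MY)"
    by measurable
  moreover have "enn2real (\<integral>\<^sup>+x'. ennreal (h (x', snd p)) \<partial>S (fst p)) = smoothed S h p"
    if "p \<in> space (MX \<Otimes>\<^sub>M MY)" for p
    using that section_measurable_kernel section_in_unit unfolding smoothed_def
    by (subst integral_eq_nn_integral) (auto simp: space_pair_measure)
  ultimately show ?thesis
    by (rule measurable_cong[THEN iffD1, rotated])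
qed

lemma smoothed_diff_le_tv_dist:
  assumes "x1 \<in> space MX" "x2 \<in> space MX" "y \<in> space MY"
  shows "\<bar>smoothed S h (x1, y) - smoothed S h (x2, y)\<bar> \<le> tv_dist (S x1) (S x2)"
  unfolding smoothed_def fst_conv snd_conv
  using assms section_measurable_kernel section_in_unit
  by (intro integral_diff_le_tv_dist) (auto simp: prob_kernelD[OF S])

lemma smoothed_diff_le_lift_cost:
  fixes dX :: "'x \<Rightarrow> 'x \<Rightarrow> real" and \<psi> :: "real \<Rightarrow> real"
  assumes dX_nonneg: "\<And>x1 x2. x1 \<in> space MX \<Longrightarrow> x2 \<in> space MX \<Longrightarrow> dX x1 x2 \<ge> 0"
    and S_tv: "\<And>x1 x2. x1 \<in> space MX \<Longrightarrow> x2 \<in> space MX \<Longrightarrow>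
                 tv_dist (S x1) (S x2) \<le> \<psi> (dX x1 x2)"
    and "\<tau>1 \<in> space (MX \<Otimes>\<^sub>M MY)" "\<tau>2 \<in> space (MX \<Otimes>\<^sub>M MY)"
    and "lift_cost dX \<tau>1 \<tau>2 \<noteq> \<infinity>"
  shows "\<bar>smoothed S h \<tau>1 - smoothed S h \<tau>2\<bar> \<le> \<psi> (enn2real (lift_cost dX \<tau>1 \<tau>2))"
proof -
  obtain x1 x2 y where \<tau>: "\<tau>1 = (x1, y)" "\<tau>2 = (x2, y)"
    and x: "x1 \<in> space MX" "x2 \<in> space MX" and y: "y \<in> space MY"
    using assms(3-5)
    by (cases \<tau>1, cases \<tau>2) (auto simp: lift_cost_def space_pair_measure split: if_splits)
  have "enn2real (lift_cost dX \<tau>1 \<tau>2) = dX x1 x2"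
    using dX_nonneg[OF x] by (simp add: lift_cost_def \<tau>)
  then show ?thesis
    using smoothed_diff_le_tv_dist[OF x y] S_tv[OF x] by (simp add: \<tau>)
qed

end

lemma coupling_integral_diff_le_concave:
  fixes M :: "('a \<times> 'a) measure" and f :: "'a \<Rightarrow> real" and \<psi> :: "real \<Rightarrow> real"
  assumes "prob_space M" and sets_M: "sets M = sets (N \<Otimes>\<^sub>M N)"
    and f: "f \<in> borel_measurable N" "\<And>x. x \<in> space N \<Longrightarrow> \<bar>f x\<bar> \<le> B"
    and r: "integrable M r" "AE p in M. 0 \<le> r p" "(\<integral>p. r p \<partial>M) \<le> \<epsilon>"
    and f_diff: "AE p in M. \<bar>f (fst p) - f (snd p)\<bar> \<le> \<psi> (r p)"
    and concave: "concave_on {0..} \<psi>" and mono: "mono_on {0..} \<psi>"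
  shows "\<bar>(\<integral>x. f x \<partial>distr M N fst) - (\<integral>x. f x \<partial>distr M N snd)\<bar> \<le> \<psi> \<epsilon>"
proof -
  interpret prob_space M by fact
  have fst: "fst \<in> M \<rightarrow>\<^sub>M N" and snd: "snd \<in> M \<rightarrow>\<^sub>M N"
    using measurable_cong_sets[OF sets_M refl] by auto
  have "integrable M (\<lambda>p. f (g p))" if g: "g \<in> M \<rightarrow>\<^sub>M N" for g
  proof (rule integrable_const_bound[where B = B])
    show "AE p in M. norm (f (g p)) \<le> B"
      using f(2) measurable_space[OF g] by (intro AE_I2) simp
    show "(\<lambda>p. f (g p)) \<in> borel_measurable M"
      using measurable_compose[OF g f(1)] .
  qed
  note integrable = this[OF fst] this[OF snd]
  have "\<bar>(\<integral>x. f x \<partial>distr M N fst) - (\<integral>x. f x \<partial>distr M N snd)\<bar>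
      = \<bar>expectation (\<lambda>p. f (fst p) - f (snd p))\<bar>"
    using integrable by (simp add: integral_distr[OF fst f(1)] integral_distr[OF snd f(1)])
  also have "\<dots> \<le> expectation (\<lambda>p. \<bar>f (fst p) - f (snd p)\<bar>)"
    by (rule integral_abs_bound)
  also have "\<dots> \<le> \<psi> \<epsilon>"
    using integrable by (intro expectation_le_concave_mono[OF _ r f_diff concave mono]) auto
  finally show ?thesis .
qed

lemma integrable_enn2real_of_nn_integral_le:
  fixes f :: "'a \<Rightarrow> ennreal"
  assumes f: "f \<in> borel_measurable M" and le: "(\<integral>\<^sup>+x. f x \<partial>M) \<le> ennreal c" and "0 \<le> c"
  shows "integrable M (\<lambda>x. enn2real (f x))" "(\<integral>x. enn2real (f x) \<partial>M) \<le> c"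
proof -
  have "(\<integral>\<^sup>+x. ennreal (enn2real (f x)) \<partial>M) \<le> (\<integral>\<^sup>+x. f x \<partial>M)"
    by (intro nn_integral_mono) (simp add: ennreal_enn2real_if)
  also note le
  finally have bound: "(\<integral>\<^sup>+x. ennreal (enn2real (f x)) \<partial>M) \<le> ennreal c" .
  then show "integrable M (\<lambda>x. enn2real (f x))"
    using f le_less_trans[OF bound ennreal_less_top] by (intro integrableI_nonneg) auto
  show "(\<integral>x. enn2real (f x) \<partial>M) \<le> c"
    using f bound \<open>0 \<le> c\<close> by (subst integral_eq_nn_integral) (auto intro: enn2real_leI)
qed

theorem theorem1:
  fixes MX :: "'x measure" and MY :: "'y measure"
    and dX :: "'x \<Rightarrow> 'x \<Rightarrow> real"
    and D D' :: "('x \<times> 'y) measure"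
    and \<gamma> :: "(('x \<times> 'y) \<times> ('x \<times> 'y)) measure"
    and \<epsilon> :: real
    and S :: "'x \<Rightarrow> 'x measure"
    and \<psi> :: "real \<Rightarrow> real"
    and h :: "'x \<times> 'y \<Rightarrow> real"
  assumes dX_nonneg: "\<And>x1 x2. x1 \<in> space MX \<Longrightarrow> x2 \<in> space MX \<Longrightarrow> dX x1 x2 \<ge> 0"
    and D_prob: "prob_space D" and D_sets: "sets D = sets (MX \<Otimes>\<^sub>M MY)"
    and D'_prob: "prob_space D'" and D'_sets: "sets D' = sets (MX \<Otimes>\<^sub>M MY)"
    and \<gamma>_sets: "sets \<gamma> = sets ((MX \<Otimes>\<^sub>M MY) \<Otimes>\<^sub>M (MX \<Otimes>\<^sub>M MY))"
    and \<gamma>_fst: "distr \<gamma> (MX \<Otimes>\<^sub>M MY) fst = D"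
    and \<gamma>_snd: "distr \<gamma> (MX \<Otimes>\<^sub>M MY) snd = D'"
    and cost_meas: "(\<lambda>p. lift_cost dX (fst p) (snd p))
                      \<in> borel_measurable ((MX \<Otimes>\<^sub>M MY) \<Otimes>\<^sub>M (MX \<Otimes>\<^sub>M MY))"
    and eps_nonneg: "\<epsilon> \<ge> 0"
    and coupling_cost: "(\<integral>\<^sup>+ p. lift_cost dX (fst p) (snd p) \<partial>\<gamma>) \<le> ennreal \<epsilon>"
    and S_kernel: "S \<in> MX \<rightarrow>\<^sub>M prob_algebra MX"
    and \<psi>_concave: "concave_on {0..} \<psi>"
    and \<psi>_mono: "mono_on {0..} \<psi>"
    and S_tv: "\<And>x1 x2. x1 \<in> space MX \<Longrightarrow> x2 \<in> space MX \<Longrightarrow>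
                 tv_dist (S x1) (S x2) \<le> \<psi> (dX x1 x2)"
    and h_meas: "h \<in> borel_measurable (MX \<Otimes>\<^sub>M MY)"
    and h_range: "\<And>p. p \<in> space (MX \<Otimes>\<^sub>M MY) \<Longrightarrow> h p \<in> {0..1}"
  shows "\<bar>(\<integral>p. smoothed S h p \<partial>D) - (\<integral>p. smoothed S h p \<partial>D')\<bar> \<le> \<psi> \<epsilon>"
proof -
  interpret smoothing MX MY S h
    using S_kernel h_meas h_range by unfold_locales
  have "prob_space \<gamma>"
    using \<gamma>_fst D_prob measurable_cong_sets[OF \<gamma>_sets refl]
    by (intro prob_space_distrD[of fst _ "MX \<Otimes>\<^sub>M MY"]) auto
  have cost: "(\<lambda>p. lift_cost dX (fst p) (snd p)) \<in> borel_measurable \<gamma>"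
    using cost_meas measurable_cong_sets[OF \<gamma>_sets refl] by blast
  note r = integrable_enn2real_of_nn_integral_le[OF cost coupling_cost eps_nonneg]
  have "AE p in \<gamma>. lift_cost dX (fst p) (snd p) \<noteq> \<infinity>"
    using coupling_cost by (intro nn_integral_PInf_AE[OF cost]) (auto simp: top_unique)
  with AE_space have smoothed_diff: "AE p in \<gamma>. \<bar>smoothed S h (fst p) - smoothed S h (snd p)\<bar>
      \<le> \<psi> (enn2real (lift_cost dX (fst p) (snd p)))"
  proof eventually_elim
    case (elim p)
    then have "fst p \<in> space (MX \<Otimes>\<^sub>M MY)" "snd p \<in> space (MX \<Otimes>\<^sub>M MY)"
      by (simp_all add: sets_eq_imp_space_eq[OF \<gamma>_sets] space_pair_measure mem_Times_iff)
    with elim(2) dX_nonneg S_tv show ?case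
      by (blast intro: smoothed_diff_le_lift_cost)
  qed
  have "\<bar>(\<integral>p. smoothed S h p \<partial>distr \<gamma> (MX \<Otimes>\<^sub>M MY) fst)
      - (\<integral>p. smoothed S h p \<partial>distr \<gamma> (MX \<Otimes>\<^sub>M MY) snd)\<bar> \<le> \<psi> \<epsilon>"
    using smoothed_in_unit
    by (intro coupling_integral_diff_le_concave[OF \<open>prob_space \<gamma>\<close> \<gamma>_sets
          borel_measurable_smoothed _ r(1) _ r(2) smoothed_diff
          \<psi>_concave \<psi>_mono, where B = 1]) auto
  then show ?thesis
    unfolding \<gamma>_fst \<gamma>_snd .
qed

end
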